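(* Let $T\in(0,\infty]$. Let $v:M\times[0,T)\to\mathbb R\cup\{+\infty\}$ be lower semicontinuous, a BJ subsolution of $$u_t+H(x,D_xu,u)=0\quad\text{in }M\times(0,T),$$ and bounded from below on $M\times[0,T)$. Let $C_0,C_1>0$ be constants such that $H(x,p,0)\ge -C_0$ for all $(x,p)\in T^*M$ and $v\ge -C_1$ on $M\times[0,T)$. Fix $y\in M$. (a) If $\liminf_{t\to0+}v(y,t)<\infty$, then for all $t\in(0,T)$, $$v(y,t)\le e^{\Lambda t}\liminf_{s\to0+}v(y,s)+(C_0\Lambda^{-1}+2C_1)(e^{\Lambda t}-1).$$ (b) For any $s\in(0,T)$ with $v(y,s)<\infty$, and for all $t\in(s,T)$, $$v(y,t)\le v(y,s)e^{\Lambda(t-s)}+(C_0\Lambda^{-1}+2C_1)(e^{\Lambda(t-s)}-1).$$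
   Context: $M$ is a connected, closed smooth Riemannian manifold, and $|\cdot|$ denotes the induced norms on the fibers of $T^*M$. $H:T^*M\times\mathbb R\to\mathbb R$ satisfies: (H1) $H$ is continuous. (H2) For every $R>0$ there is $K>0$ with $H(x,p,u)>R$ whenever $|u|\le R$ and $|p|\ge K$. (H3) $p\mapsto H(x,p,u)$ is convex on $T^*_xM$ for each $(x,u)$. (H4) There is $\Lambda>0$ with $|H(x,p,u)-H(x,p,v)|\le\Lambda|u-v|$ for all $(x,p)$ and $u,v\in\mathbb R$. The constant $\Lambda$ in the claim is this Lipschitz constant. A lower semicontinuous $u:M\times(0,T)\to\mathbb R\cup\{+\infty\}$ is a BJ subsolution of $u_t+H(x,D_xu,u)=0$ in $M\times(0,T)$ if, whenever $\phi\in C^1(M\times(0,T),\mathbb R)$ and $u-\phi$ attains its minimum at $(x,t)$, one has $\phi_t(x,t)+H(x,D_x\phi(x,t),u(x,t))\le0$. For functions on $M\times[0,T)$, this refers to restrictions to $M\times(0,T)$. *)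

theory Defs
  imports "HOL-Analysis.Analysis"
begin

fun dirder :: "'a::real_normed_vector list \<Rightarrow> ('a \<Rightarrow> 'b::real_normed_vector) \<Rightarrow> 'a \<Rightarrow> 'b" where
  "dirder [] F = F"
| "dirder (v # vs) F = (\<lambda>x. frechet_derivative (dirder vs F) (at x) v)"

definition smooth_on :: "'a::real_normed_vector set \<Rightarrow> ('a \<Rightarrow> 'b::real_normed_vector) \<Rightarrow> bool" where
  "smooth_on U F \<longleftrightarrow>
     (\<forall>vs. (\<forall>x\<in>U. dirder vs F differentiable (at x)) \<and> continuous_on U (dirder vs F))"

text \<open>It carries the
  Riemannian metric induced by the ambient inner product.\<close>
definition closed_submanifold :: "'a::euclidean_space set \<Rightarrow> bool" where
  "closed_submanifold M \<longleftrightarrow> compact M \<and> connected M \<and> M \<noteq> {} \<and>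
     (\<forall>x\<in>M. \<exists>U (F::'a \<Rightarrow> 'a) r. open U \<and> x \<in> U \<and> smooth_on U F \<and>
        (\<forall>z\<in>U. dim (range (frechet_derivative F (at z))) = r) \<and>
        M \<inter> U = {z\<in>U. F z = 0})"

text \<open>Tangent space at x: velocities of differentiable curves in M through x.
  Covectors are identified with tangent vectors via the induced metric.\<close>
definition tangent_space :: "'a::euclidean_space set \<Rightarrow> 'a \<Rightarrow> 'a set" where
  "tangent_space M x = {v. \<exists>\<gamma>::real \<Rightarrow> 'a. (\<forall>t. \<gamma> t \<in> M) \<and> \<gamma> 0 = x \<and>
                              (\<gamma> has_vector_derivative v) (at 0)}"

definition lsc_on :: "'b::topological_space set \<Rightarrow> ('b \<Rightarrow> ereal) \<Rightarrow> bool" where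
  "lsc_on S u \<longleftrightarrow> (\<forall>z\<in>S. \<forall>c. c < u z \<longrightarrow> eventually (\<lambda>w. c < u w) (at z within S))"

definition stdom :: "'a set \<Rightarrow> ereal \<Rightarrow> ('a \<times> real) set" where
  "stdom M T = M \<times> {t. 0 < t \<and> ereal t < T}"

text \<open>C^1 test functions on M x (0,T): restrictions of C^1 functions on an open
  neighbourhood of M x (0,T) in the ambient space (equivalent, via a tubular
  neighbourhood projection, to intrinsic C^1 functions). phi' is the derivative.\<close>
definition C1_test :: "'a::euclidean_space set \<Rightarrow> ereal \<Rightarrow> ('a \<times> real \<Rightarrow> real)
                        \<Rightarrow> ('a \<times> real \<Rightarrow> ('a \<times> real) \<Rightarrow>\<^sub>L real) \<Rightarrow> bool" where
  "C1_test M T \<phi> \<phi>' \<longleftrightarrow> (\<exists>W. open W \<and> stdom M T \<subseteq> W \<and>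
      (\<forall>z\<in>W. (\<phi> has_derivative blinfun_apply (\<phi>' z)) (at z)) \<and> continuous_on W \<phi>')"

text \<open>The time derivative of phi is
  phi'(x,t)(0,1); D_x phi(x,t) is the covector v |-> phi'(x,t)(v,0) on T_xM, represented
  (via the metric) by the tangent vector p with p . v = phi'(x,t)(v,0).\<close>
definition BJ_subsol :: "'a::euclidean_space set \<Rightarrow> ('a \<Rightarrow> 'a \<Rightarrow> real \<Rightarrow> real) \<Rightarrow> ereal
                          \<Rightarrow> ('a \<times> real \<Rightarrow> ereal) \<Rightarrow> bool" where
  "BJ_subsol M H T u \<longleftrightarrow> lsc_on (stdom M T) u \<and>
     (\<forall>\<phi> \<phi>' x t. C1_test M T \<phi> \<phi>' \<and> (x, t) \<in> stdom M T \<and> u (x, t) \<noteq> \<infinity> \<and>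
        (\<forall>z\<in>stdom M T. u (x, t) - ereal (\<phi> (x, t)) \<le> u z - ereal (\<phi> z)) \<longrightarrow>
        (\<forall>p\<in>tangent_space M x. (\<forall>v\<in>tangent_space M x. p \<bullet> v = \<phi>' (x, t) (v, 0)) \<longrightarrow>
           \<phi>' (x, t) (0, 1) + H x p (real_of_ereal (u (x, t))) \<le> 0))"

end

theory Submission
  imports Defs
begin

(* Part (b) is a comparison argument. If v(y, t) exceeded the bound, test v from below at a
   minimum of v - phi, where phi(z, tau) = theta(tau) - K |z - y|^2 and theta grows strictly faster
   than the solution of theta' = Lambda (theta + C) through v(y, s), with quadratic penalties
   outside the time window [s/2, t + eta). Lower semicontinuity of v near (y, t) and the bound
   v >= -C1 confine the minimum to a time before t, where the subsolution inequality contradicts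
   H(x, p, u) >= -C0 - Lambda |u| >= -Lambda (u + C).
   The definition of subsolution asks for a tangent vector representing D_x phi, so the tangent
   spaces of M must be linear; this is where the constant rank theorem enters.
   Part (a) follows from (b) by letting s -> 0+ along times where v(y, s) is near its liminf. *)

lemma dim_kernel_add_dim_range:
  fixes f :: "'a::euclidean_space \<Rightarrow> 'b::euclidean_space"
  assumes lf: "linear f"
  shows "dim {x. f x = 0} + dim (range f) = DIM('a)"
proof -
  let ?N = "{x. f x = 0}"
  let ?O = "{y. \<forall>x\<in>?N. orthogonal x y}"
  have sN: "subspace ?N" using lf by (simp add: linear_subspace_kernel)
  have sO: "subspace ?O" by (auto simp: subspace_def orthogonal_def inner_add_right)
  have dim_O: "dim ?O + dim ?N = DIM('a)"
    using dim_subspace_orthogonal_to_vectors[OF sN subspace_UNIV] by simp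
  have inj: "inj_on f (span ?O)"
  proof (rule inj_onI)
    fix a b assume a: "a \<in> span ?O" and b: "b \<in> span ?O" and e: "f a = f b"
    have "span ?O = ?O" using sO by (rule span_eq_iff[THEN iffD2])
    then have "a \<in> ?O" "b \<in> ?O" using a b by blast+
    then have "a - b \<in> ?O" by (auto simp: orthogonal_def inner_diff_right)
    moreover have "a - b \<in> ?N" using e lf by (simp add: linear_diff)
    ultimately have "orthogonal (a - b) (a - b)" by blast
    then show "a = b" by (simp add: orthogonal_def)
  qed
  have image_O: "f ` ?O = range f"
  proof
    show "range f \<subseteq> f ` ?O"
    proof
      fix y assume "y \<in> range f"
      then obtain x where y: "y = f x" by blast
      obtain a b where "a \<in> span ?N" and orth: "\<And>w. w \<in> span ?N \<Longrightarrow> orthogonal b w" and "x = a + b"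
        using orthogonal_subspace_decomp_exists [of ?N x] by blast
      have "span ?N = ?N" using sN by (rule span_eq_iff[THEN iffD2])
      then have "a \<in> ?N" using \<open>a \<in> span ?N\<close> by blast
      then have "f x = f b" using \<open>x = a + b\<close> lf by (simp add: linear_add)
      moreover have "b \<in> ?O"
      proof -
        have "orthogonal x' b" if "f x' = 0" for x'
          using orth[of x'] that span_base[of x' ?N] orthogonal_commute by blast
        then show ?thesis by blast
      qed
      ultimately show "y \<in> f ` ?O" using y by blast
    qed
  qed auto
  have "dim (f ` ?O) = dim ?O" using dim_image_eq[OF lf inj] .
  then show ?thesis using dim_O image_O by simp
qed

lemma subspace_orthogonal_projection:
  fixes K :: "'a::euclidean_space set"
  assumes sK: "subspace K"
  obtains P where "linear P" "\<And>h. P h \<in> K" "\<And>h k. k \<in> K \<Longrightarrow> (h - P h) \<bullet> k = 0"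
    "\<And>k. k \<in> K \<Longrightarrow> P k = k"
proof -
  obtain B where B: "B \<subseteq> K" "pairwise orthogonal B" "\<And>x. x \<in> B \<Longrightarrow> norm x = 1"
    "independent B" "card B = dim K" "span B = K"
    using orthonormal_basis_subspace[OF sK] by metis
  have fB: "finite B" using B(4) independent_imp_finite by blast
  define P where "P h = (\<Sum>b\<in>B. (h \<bullet> b) *\<^sub>R b)" for h
  have lin: "linear P"
  proof (rule linearI)
    show "P (x + y) = P x + P y" for x y
      by (simp add: P_def inner_add_left scaleR_add_left sum.distrib)
    show "P (c *\<^sub>R x) = c *\<^sub>R P x" for c x
      by (simp add: P_def scaleR_sum_right)
  qed
  have inK: "P h \<in> K" for h
  proof -
    have "P h \<in> span B" unfolding P_def
      by (intro span_sum span_scale span_base)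
    then show ?thesis using B(6) by simp
  qed
  have orth_B: "(h - P h) \<bullet> b' = 0" if "b' \<in> B" for h b'
  proof -
    have "P h \<bullet> b' = (\<Sum>b\<in>B. (h \<bullet> b) * (b \<bullet> b'))" unfolding P_def by (simp add: inner_sum_left)
    also have "\<dots> = (\<Sum>b\<in>B. if b = b' then h \<bullet> b' else 0)"
    proof (rule sum.cong)
      fix b assume "b \<in> B"
      show "(h \<bullet> b) * (b \<bullet> b') = (if b = b' then h \<bullet> b' else 0)"
      proof (cases "b = b'")
        case True then show ?thesis using B(3)[OF that] by (simp add: dot_square_norm)
      next
        case False then show ?thesis using B(2) \<open>b \<in> B\<close> that
          by (auto simp: pairwise_def orthogonal_def)
      qed
    qed simp
    also have "\<dots> = h \<bullet> b'" using fB that by simp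
    finally show ?thesis by (simp add: inner_diff_left)
  qed
  have orth_K: "(h - P h) \<bullet> k = 0" if "k \<in> K" for h k
  proof -
    have "k \<in> span B" using B(6) that by simp
    have "orthogonal (h - P h) k"
      by (rule orthogonal_to_span[OF \<open>k \<in> span B\<close>]) (simp add: orthogonal_def orth_B)
    then show ?thesis by (simp add: orthogonal_def)
  qed
  have P_id: "P k = k" if "k \<in> K" for k
  proof -
    have "k - P k \<in> K" using that inK sK by (simp add: subspace_diff)
    then have "(k - P k) \<bullet> (k - P k) = 0" using orth_K by blast
    then show ?thesis by simp
  qed
  show ?thesis by (rule that[OF lin inK orth_K P_id])
qed

text \<open>The dimension count behind the constant rank theorem: if \<open>h \<mapsto> L\<^sup>* (A h) + P h\<close> is
  injective, where \<open>P\<close> maps into \<open>ker L\<close>, then a nonzero \<open>u = A h\<close> with \<open>L\<^sup>* u = 0\<close>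
  would make the image of \<open>ker A + \<real>h\<close> a subspace of \<open>ker L\<close> of dimension larger than
  \<open>dim (ker A) = dim (ker L)\<close>.\<close>
lemma kernel_adjoint_inter_range_trivial:
  fixes A L :: "'a::euclidean_space \<Rightarrow> 'b::euclidean_space" and P :: "'a \<Rightarrow> 'a"
  assumes lA: "linear A" and lL: "linear L" and lP: "linear P"
    and rank: "dim (range A) = dim (range L)"
    and PK: "\<And>h. L (P h) = 0"
    and inj: "inj (\<lambda>h. adjoint L (A h) + P h)"
    and u0: "adjoint L u = 0" and u: "u \<in> range A"
  shows "u = 0"
proof (rule ccontr)
  assume nz: "u \<noteq> 0"
  obtain h where uh: "u = A h" using u by blast
  let ?N = "{k. A k = 0}"
  let ?K = "{k. L k = 0}"
  let ?S = "insert h ?N"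
  let ?Psi = "\<lambda>h. adjoint L (A h) + P h"
  have lLa: "linear (adjoint L)" using lL by (rule adjoint_linear)
  have lPsi: "linear ?Psi"
    using linear_compose[OF lA lLa] lP by (simp add: o_def linear_compose_add)
  have "span ?N = ?N"
    using lA by (intro span_eq_iff[THEN iffD2] linear_subspace_kernel)
  moreover have "h \<notin> ?N" using nz uh by simp
  ultimately have "h \<notin> span ?N" by metis
  then have dim_S: "dim ?S = dim ?N + 1" by (simp add: dim_insert)
  have "?Psi ` ?S \<subseteq> ?K"
    using u0 uh PK lLa by (auto simp: linear_0)
  then have "dim (?Psi ` ?S) \<le> dim ?K" by (rule dim_subset)
  moreover have "dim (?Psi ` ?S) = dim ?S"
    by (rule dim_image_eq[OF lPsi inj_on_subset[OF inj subset_UNIV]])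
  moreover have "dim ?N = dim ?K"
    using dim_kernel_add_dim_range[OF lA] dim_kernel_add_dim_range[OF lL] rank by linarith
  ultimately show False using dim_S by linarith
qed

lemma inverse_function_theorem_injective:
  fixes f :: "'a::euclidean_space \<Rightarrow> 'a"
  assumes U: "open U" "x0 \<in> U"
    and der: "\<And>x. x \<in> U \<Longrightarrow> (f has_derivative f' x) (at x)"
    and cont: "\<And>v. continuous_on U (\<lambda>x. f' x v)"
    and inj: "inj (f' x0)"
  obtains U' V g g' where "open U'" "U' \<subseteq> U" "x0 \<in> U'" "open V" "f x0 \<in> V"
    "homeomorphism U' V f g"
    "\<And>y. y \<in> V \<Longrightarrow> (g has_derivative (g' y)) (at y)"
    "\<And>y. y \<in> V \<Longrightarrow> g' y = inv (f' (g y))"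
    "\<And>y. y \<in> V \<Longrightarrow> bij (f' (g y))"
proof -
  have bl: "bounded_linear (f' x)" if "x \<in> U" for x
    using der[OF that] by (rule has_derivative_bounded_linear)
  define F' where "F' x = Blinfun (f' x)" for x
  have F': "blinfun_apply (F' x) = f' x" if "x \<in> U" for x
    unfolding F'_def using bl[OF that] by (simp add: bounded_linear_Blinfun_apply)
  have der': "(f has_derivative blinfun_apply (F' x)) (at x)" if "x \<in> U" for x
    using der[OF that] F'[OF that] by simp
  have cont': "continuous_on U F'"
  proof (rule continuous_on_blinfun_componentwise)
    fix i
    show "continuous_on U (\<lambda>x. blinfun_apply (F' x) i)"
      using cont[of i] by (rule continuous_on_eq) (simp add: F')
  qed
  have lf: "linear (f' x0)" using bl[OF U(2)] by (rule bounded_linear.linear)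
  obtain G where lG: "linear G" and G: "G \<circ> f' x0 = id"
    using linear_injective_left_inverse[OF lf inj] by blast
  have "blinfun_apply (Blinfun G) = G"
    using lG by (simp add: bounded_linear_Blinfun_apply linear_conv_bounded_linear)
  then have "Blinfun G o\<^sub>L F' x0 = id_blinfun"
    using G F'[OF U(2)] by (intro blinfun_eqI) (simp add: pointfree_idE)
  then obtain U' V g g' where UV: "open U'" "U' \<subseteq> U" "x0 \<in> U'" "open V" "f x0 \<in> V"
    "homeomorphism U' V f g"
    and g: "\<And>y. y \<in> V \<Longrightarrow> (g has_derivative (g' y)) (at y)"
    "\<And>y. y \<in> V \<Longrightarrow> g' y = inv (blinfun_apply (F' (g y)))"
    "\<And>y. y \<in> V \<Longrightarrow> bij (blinfun_apply (F' (g y)))"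
    using inverse_function_theorem[OF U(1) der' cont' U(2)] by blast
  have gU: "g y \<in> U" if "y \<in> V" for y
    using UV(2,6) that unfolding homeomorphism_def by blast
  show ?thesis
  proof (rule that[OF UV g(1)])
    fix y assume y: "y \<in> V"
    have "blinfun_apply (F' (g y)) = f' (g y)" using F' gU[OF y] by blast
    then show "g' y = inv (f' (g y))" "bij (f' (g y))"
      using g(2,3)[OF y] by simp_all
  qed
qed

lemma inj_adjoint_comp_add_kernel_projection:
  fixes L :: "'a::euclidean_space \<Rightarrow> 'b::euclidean_space"
  assumes lL: "linear L" and lP: "linear P" and PK: "\<And>h. L (P h) = 0"
    and Port: "\<And>h k. L k = 0 \<Longrightarrow> (h - P h) \<bullet> k = 0" and Pid: "\<And>k. L k = 0 \<Longrightarrow> P k = k"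
  shows "inj (\<lambda>h. adjoint L (L h) + P h)"
proof -
  have "linear (\<lambda>h. adjoint L (L h))"
    using linear_compose[OF lL adjoint_linear[OF lL]] by (simp add: o_def)
  then have lin: "linear (\<lambda>h. adjoint L (L h) + P h)" using lP by (rule linear_compose_add)
  have "h = 0" if h: "adjoint L (L h) + P h = 0" for h
  proof -
    have "(h - P h) \<bullet> P h = 0" by (rule Port[OF PK])
    then have "h \<bullet> P h = P h \<bullet> P h" by (simp add: inner_diff_left)
    moreover have "h \<bullet> adjoint L (L h) = L h \<bullet> L h" by (rule adjoint_works[OF lL])
    ultimately have "L h \<bullet> L h + P h \<bullet> P h = h \<bullet> (adjoint L (L h) + P h)"
      by (simp only: inner_add_right)
    also have "\<dots> = 0" using h by simp
    finally have "L h \<bullet> L h = 0 \<and> P h \<bullet> P h = 0"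
      using add_nonneg_eq_0_iff[OF inner_ge_zero inner_ge_zero] by blast
    then have "L h = 0" "P h = 0" by simp_all
    then show "h = 0" using Pid[of h] by simp
  qed
  then show ?thesis unfolding linear_injective_0[OF lin] by blast
qed

text \<open>A chart from the constant rank theorem: with \<open>L = F' x\<close> and \<open>P\<close> the orthogonal projection
  onto \<open>ker L\<close>, the map \<open>\<Phi> z = L\<^sup>* (F z) + P (z - x)\<close> has injective derivative \<open>L\<^sup>* L + P\<close>
  at \<open>x\<close>, and \<open>g\<close> is its local inverse. Constant rank enters only through the injectivity of
  \<open>L\<^sup>*\<close> on the ranges of \<open>F' (g y)\<close>.\<close>
lemma constant_rank_local_inverse:
  fixes F :: "'a::euclidean_space \<Rightarrow> 'b::euclidean_space"
  assumes U: "open U" "x \<in> U" and Fx: "F x = 0"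
    and F': "\<And>z. z \<in> U \<Longrightarrow> (F has_derivative F' z) (at z)"
    and cont: "\<And>v. continuous_on U (\<lambda>z. F' z v)"
    and rank: "\<And>z. z \<in> U \<Longrightarrow> dim (range (F' z)) = dim (range (F' x))"
  obtains V g g' where "open V" "0 \<in> V" "g 0 = x"
    "\<And>y. y \<in> V \<Longrightarrow> g y \<in> U" "\<And>y. y \<in> V \<Longrightarrow> (g has_derivative g' y) (at y)"
    "\<And>k. F' x k = 0 \<Longrightarrow> g' 0 k = k"
    "\<And>y. y \<in> V \<Longrightarrow> F' x y = 0 \<Longrightarrow> adjoint (F' x) (F (g y)) = 0"
    "\<And>y u. y \<in> V \<Longrightarrow> u \<in> range (F' (g y)) \<Longrightarrow> adjoint (F' x) u = 0 \<Longrightarrow> u = 0"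
proof -
  have lF: "linear (F' z)" if "z \<in> U" for z
    using F'[OF that] by (rule has_derivative_linear)
  define L where "L = F' x"
  have lL: "linear L" unfolding L_def using lF U(2) .
  define K where "K = {k. L k = 0}"
  have sK: "subspace K" unfolding K_def using lL by (simp add: linear_subspace_kernel)
  obtain P where lP: "linear P" and PK: "\<And>h. P h \<in> K"
    and Port: "\<And>h k. k \<in> K \<Longrightarrow> (h - P h) \<bullet> k = 0" and Pid: "\<And>k. k \<in> K \<Longrightarrow> P k = k"
    using subspace_orthogonal_projection[OF sK] by blast
  define La where "La = adjoint L"
  have lLa: "linear La" unfolding La_def using lL by (rule adjoint_linear)
  have adj: "k \<bullet> La u = L k \<bullet> u" for k u unfolding La_def using lL by (rule adjoint_works)
  have LaK: "k \<bullet> La u = 0" if "k \<in> K" for k u using that adj K_def by simp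
  define \<Phi> where "\<Phi> z = La (F z) + P (z - x)" for z
  define D where "D z h = La (F' z h) + P h" for z h
  have der\<Phi>: "(\<Phi> has_derivative D z) (at z)" if "z \<in> U" for z
  proof -
    have "((\<lambda>z. La (F z)) has_derivative (\<lambda>h. La (F' z h))) (at z)"
      using lLa F'[OF that] by (simp add: linear_conv_bounded_linear bounded_linear.has_derivative)
    moreover have "((\<lambda>z. z - x) has_derivative (\<lambda>h. h)) (at z)"
      by (auto intro!: derivative_eq_intros)
    then have "((\<lambda>z. P (z - x)) has_derivative P) (at z)"
      by (rule bounded_linear.has_derivative[OF lP[unfolded linear_conv_bounded_linear]])
    ultimately show ?thesis
      unfolding \<Phi>_def D_def by (rule has_derivative_add)
  qed
  have contD: "continuous_on U (\<lambda>z. D z v)" for v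
    unfolding D_def by (intro continuous_on_add continuous_on_const linear_continuous_on_compose[OF cont lLa])
  have DK: "D x k = k" if "k \<in> K" for k
    using that lLa Pid unfolding D_def K_def L_def by (simp add: linear_0)
  have "D x = (\<lambda>h. adjoint L (L h) + P h)" by (simp add: fun_eq_iff D_def La_def L_def)
  moreover have "inj (\<lambda>h. adjoint L (L h) + P h)"
    by (rule inj_adjoint_comp_add_kernel_projection[OF lL lP]) (use PK Port Pid in \<open>auto simp: K_def\<close>)
  ultimately have "inj (D x)" by simp
  then obtain U' V g g' where UV: "open U'" "U' \<subseteq> U" "x \<in> U'" "open V" "\<Phi> x \<in> V"
    and hom: "homeomorphism U' V \<Phi> g"
    and g: "\<And>y. y \<in> V \<Longrightarrow> (g has_derivative (g' y)) (at y)"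
      "\<And>y. y \<in> V \<Longrightarrow> g' y = inv (D (g y))" "\<And>y. y \<in> V \<Longrightarrow> bij (D (g y))"
    using inverse_function_theorem_injective[OF U der\<Phi> contD] by blast
  have \<Phi>x: "\<Phi> x = 0" unfolding \<Phi>_def using Fx lLa lP by (simp add: linear_0)
  have \<Phi>g: "\<Phi> (g y) = y" "g y \<in> U'" if "y \<in> V" for y
    using hom that unfolding homeomorphism_def by blast+
  have V0: "0 \<in> V" using UV(5) \<Phi>x by simp
  have g0: "g 0 = x" using hom UV(3) \<Phi>x unfolding homeomorphism_def by force
  show ?thesis
  proof
    show "open V" "0 \<in> V" "g 0 = x" using UV(4) V0 g0 by simp_all
    show "g y \<in> U" if "y \<in> V" for y using \<Phi>g(2)[OF that] UV(2) by blast
    show "(g has_derivative g' y) (at y)" if "y \<in> V" for y using g(1)[OF that] .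
  next
    fix k assume "F' x k = 0"
    then have "D x k = k" using DK K_def L_def by simp
    then show "g' 0 k = k" using g(2,3)[OF V0] g0 by (metis bij_inv_eq_iff)
  next
    fix y assume y: "y \<in> V" "F' x y = 0"
    let ?a = "La (F (g y))"
    have "?a = y - P (g y - x)" using \<Phi>g(1)[OF y(1)] unfolding \<Phi>_def by (simp add: algebra_simps)
    moreover have "y \<in> K" using y(2) unfolding K_def L_def by simp
    ultimately have "?a \<in> K" using sK PK by (simp add: subspace_diff)
    then have "?a \<bullet> ?a = 0" using LaK by blast
    then show "adjoint (F' x) (F (g y)) = 0" by (simp add: La_def L_def)
  next
    fix y u assume y: "y \<in> V" and u: "u \<in> range (F' (g y))" "adjoint (F' x) u = 0"
    have gU: "g y \<in> U" using \<Phi>g(2)[OF y] UV(2) by blast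
    show "u = 0"
    proof (rule kernel_adjoint_inter_range_trivial[OF lF[OF gU] lL lP _ _ _ _ u(1)])
      show "dim (range (F' (g y))) = dim (range L)" using rank[OF gU] L_def by simp
      show "L (P h) = 0" for h using PK K_def by blast
      show "inj (\<lambda>h. adjoint L (F' (g y) h) + P h)"
        using g(3)[OF y] bij_is_inj unfolding D_def La_def by blast
      show "adjoint L u = 0" using u(2) L_def by simp
    qed
  qed
qed

lemma constant_rank_curve_in_zero_set:
  fixes F :: "'a::euclidean_space \<Rightarrow> 'b::euclidean_space"
  assumes U: "open U" "x \<in> U" and Fx: "F x = 0"
    and F': "\<And>z. z \<in> U \<Longrightarrow> (F has_derivative F' z) (at z)"
    and cont: "\<And>v. continuous_on U (\<lambda>z. F' z v)"
    and rank: "\<And>z. z \<in> U \<Longrightarrow> dim (range (F' z)) = dim (range (F' x))"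
    and w: "F' x w = 0"
  obtains \<gamma> d where "d > 0" "\<gamma> 0 = x" "(\<gamma> has_vector_derivative w) (at 0)"
    "\<And>t. \<bar>t\<bar> < d \<Longrightarrow> \<gamma> t \<in> U \<and> F (\<gamma> t) = 0"
proof -
  obtain V g g' where V: "open V" "0 \<in> V" and g0: "g 0 = x"
    and gU: "\<And>y. y \<in> V \<Longrightarrow> g y \<in> U" and g': "\<And>y. y \<in> V \<Longrightarrow> (g has_derivative g' y) (at y)"
    and g'0: "\<And>k. F' x k = 0 \<Longrightarrow> g' 0 k = k"
    and adj_Fg: "\<And>y. y \<in> V \<Longrightarrow> F' x y = 0 \<Longrightarrow> adjoint (F' x) (F (g y)) = 0"
    and adj_inj: "\<And>y u. y \<in> V \<Longrightarrow> u \<in> range (F' (g y)) \<Longrightarrow> adjoint (F' x) u = 0 \<Longrightarrow> u = 0"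
    using constant_rank_local_inverse[OF U Fx F' cont rank] by blast
  obtain e where e: "e > 0" "ball 0 e \<subseteq> V" using V open_contains_ball by blast
  define d where "d = e / (norm w + 1)"
  have nw: "norm w + 1 > 0" using norm_ge_zero[of w] by linarith
  have d: "d > 0" unfolding d_def using e(1) nw by (rule divide_pos_pos)
  define I where "I = ball (0::real) d"
  have twV: "t *\<^sub>R w \<in> V" if "t \<in> I" for t
  proof -
    have "norm (t *\<^sub>R w) \<le> \<bar>t\<bar> * (norm w + 1)" by (simp add: mult_left_mono)
    also have "\<dots> < d * (norm w + 1)"
      using that nw unfolding I_def by (intro mult_strict_right_mono) auto
    also have "\<dots> = e" unfolding d_def using nw by simp
    finally show ?thesis using e(2) by auto
  qed
  have twK: "F' x (t *\<^sub>R w) = 0" for t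
    using w linear_scale[OF has_derivative_linear[OF F'[OF U(2)]]] by simp
  have ray_deriv: "((\<lambda>t. g (t *\<^sub>R w)) has_derivative (\<lambda>h. g' (t *\<^sub>R w) (h *\<^sub>R w))) (at t)"
    if "t \<in> I" for t
  proof -
    have "((\<lambda>t. t *\<^sub>R w) has_derivative (\<lambda>h. h *\<^sub>R w)) (at t)"
      by (auto intro!: derivative_eq_intros)
    from has_derivative_compose[OF this g'[OF twV[OF that]]] show ?thesis .
  qed
  text \<open>\<open>F \<circ> g\<close> has zero derivative along the ray, because its derivative lies in the range of
    \<open>F' (g y)\<close> and is annihilated by \<open>(F' x)\<^sup>*\<close>.\<close>
  have "((\<lambda>t. F (g (t *\<^sub>R w))) has_derivative (\<lambda>h. 0)) (at t within I)" if t: "t \<in> I" for t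
  proof -
    let ?z = "g (t *\<^sub>R w)"
    define c' where "c' h = F' ?z (g' (t *\<^sub>R w) (h *\<^sub>R w))" for h
    have c': "((\<lambda>t. F (g (t *\<^sub>R w))) has_derivative c') (at t)"
      unfolding c'_def using has_derivative_compose[OF ray_deriv[OF t] F'[OF gU[OF twV[OF t]]]] .
    have lLa: "bounded_linear (adjoint (F' x))"
      using adjoint_linear[OF has_derivative_linear[OF F'[OF U(2)]]]
      by (simp add: linear_conv_bounded_linear)
    have "((\<lambda>t. adjoint (F' x) (F (g (t *\<^sub>R w)))) has_derivative (\<lambda>h. adjoint (F' x) (c' h))) (at t)"
      by (rule bounded_linear.has_derivative[OF lLa c'])
    moreover have "((\<lambda>t. adjoint (F' x) (F (g (t *\<^sub>R w)))) has_derivative (\<lambda>h. 0)) (at t)"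
    proof (rule has_derivative_transform_within_open[OF has_derivative_const _ t])
      show "open I" unfolding I_def by simp
      show "\<And>s. s \<in> I \<Longrightarrow> 0 = adjoint (F' x) (F (g (s *\<^sub>R w)))"
        using adj_Fg twV twK by simp
    qed
    ultimately have "adjoint (F' x) (c' h) = 0" for h by (metis has_derivative_unique)
    then have "c' = (\<lambda>h. 0)"
      using adj_inj[OF twV[OF t]] unfolding c'_def by blast
    then show ?thesis using c' has_derivative_at_withinI by blast
  qed
  moreover have "convex I" "0 \<in> I" unfolding I_def using d by simp_all
  ultimately have "F (g (t *\<^sub>R w)) = F (g (0 *\<^sub>R w))" if "t \<in> I" for t
    using has_derivative_zero_unique that by blast
  then have zero: "F (g (t *\<^sub>R w)) = 0" if "t \<in> I" for t
    using that g0 Fx by simp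
  show ?thesis
  proof
    show "d > 0" "g (0 *\<^sub>R w) = x" using d g0 by simp_all
    show "((\<lambda>t. g (t *\<^sub>R w)) has_vector_derivative w) (at 0)"
      using ray_deriv[of 0] g'0[OF twK] d unfolding has_vector_derivative_def I_def by simp
    show "g (t *\<^sub>R w) \<in> U \<and> F (g (t *\<^sub>R w)) = 0" if "\<bar>t\<bar> < d" for t
      using that gU twV zero unfolding I_def by simp
  qed
qed

lemma tangent_space_subset_kernel:
  fixes F :: "'a::euclidean_space \<Rightarrow> 'b::real_normed_vector"
  assumes U: "open U" "x \<in> U" and MU: "M \<inter> U = {z\<in>U. F z = 0}"
    and F': "(F has_derivative F') (at x)"
    and w: "w \<in> tangent_space M x"
  shows "F' w = 0"
proof -
  obtain \<gamma> where \<gamma>: "\<And>t. \<gamma> t \<in> M" "\<gamma> 0 = x" "(\<gamma> has_vector_derivative w) (at 0)"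
    using w unfolding tangent_space_def by blast
  have \<gamma>': "(\<gamma> has_derivative (\<lambda>t. t *\<^sub>R w)) (at 0)"
    using \<gamma>(3) by (simp add: has_vector_derivative_def)
  then have "(\<gamma> \<longlongrightarrow> x) (at 0)"
    using has_derivative_continuous \<gamma>(2) by (fastforce simp: continuous_at)
  then have "eventually (\<lambda>t. \<gamma> t \<in> U) (at 0)"
    using topological_tendstoD U by blast
  then have "eventually (\<lambda>t. 0 = F (\<gamma> t)) (at 0)"
    by (rule eventually_mono) (use \<gamma>(1) MU in auto)
  moreover have "F x = 0" using \<gamma>(1)[of 0] \<gamma>(2) U(2) MU by blast
  ultimately have "((\<lambda>t. F (\<gamma> t)) has_derivative (\<lambda>t. 0)) (at 0)"
    using has_derivative_transform_eventually[OF has_derivative_const] \<gamma>(2) by fastforce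
  moreover have "((\<lambda>t. F (\<gamma> t)) has_derivative (\<lambda>t. F' (t *\<^sub>R w))) (at 0)"
    using has_derivative_compose[OF \<gamma>'] F' \<gamma>(2) by simp
  ultimately have "(\<lambda>t. F' (t *\<^sub>R w)) = (\<lambda>t. 0)" by (rule has_derivative_unique[rotated])
  from fun_cong[OF this, of 1] show ?thesis by simp
qed

lemma kernel_subset_tangent_space:
  fixes F :: "'a::euclidean_space \<Rightarrow> 'b::euclidean_space"
  assumes U: "open U" "x \<in> U" and xM: "x \<in> M" and MU: "M \<inter> U = {z\<in>U. F z = 0}"
    and F': "\<And>z. z \<in> U \<Longrightarrow> (F has_derivative F' z) (at z)"
    and cont: "\<And>v. continuous_on U (\<lambda>z. F' z v)"
    and rank: "\<And>z. z \<in> U \<Longrightarrow> dim (range (F' z)) = dim (range (F' x))"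
    and w: "F' x w = 0"
  shows "w \<in> tangent_space M x"
proof -
  have "F x = 0" using xM U(2) MU by blast
  then obtain \<gamma> d where d: "d > 0" and \<gamma>: "\<gamma> 0 = x" "(\<gamma> has_vector_derivative w) (at 0)"
    and \<gamma>M: "\<And>t. \<bar>t\<bar> < d \<Longrightarrow> \<gamma> t \<in> U \<and> F (\<gamma> t) = 0"
    using constant_rank_curve_in_zero_set[OF U _ F' cont rank w] by blast
  define \<gamma>' where "\<gamma>' t = (if \<bar>t\<bar> < d then \<gamma> t else x)" for t
  have "\<gamma>' t \<in> M" for t
    using \<gamma>M[of t] MU xM unfolding \<gamma>'_def by auto
  moreover have "\<gamma>' 0 = x" using \<gamma>(1) d unfolding \<gamma>'_def by simp
  moreover have "(\<gamma>' has_vector_derivative w) (at 0)"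
    unfolding has_vector_derivative_def
  proof (rule has_derivative_transform_within_open)
    show "(\<gamma> has_derivative (\<lambda>t. t *\<^sub>R w)) (at 0)" using \<gamma>(2) by (simp add: has_vector_derivative_def)
    show "open (ball (0::real) d)" "(0::real) \<in> ball 0 d" using d by simp_all
    show "\<gamma> t = \<gamma>' t" if "t \<in> ball 0 d" for t using that unfolding \<gamma>'_def by simp
  qed
  ultimately show ?thesis unfolding tangent_space_def by blast
qed

lemma subspace_tangent_space:
  assumes "closed_submanifold M" and x: "x \<in> M"
  shows "subspace (tangent_space M x)"
proof -
  obtain U and F :: "'a \<Rightarrow> 'a" and r where U: "open U" "x \<in> U" and smooth: "smooth_on U F"
    and rank: "\<forall>z\<in>U. dim (range (frechet_derivative F (at z))) = r"
    and MU: "M \<inter> U = {z\<in>U. F z = 0}"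
    using assms unfolding closed_submanifold_def by blast
  define F' where "F' z = frechet_derivative F (at z)" for z
  have "\<forall>z\<in>U. dirder [] F differentiable (at z)" using smooth unfolding smooth_on_def by blast
  then have F': "(F has_derivative F' z) (at z)" if "z \<in> U" for z
    using that unfolding F'_def by (simp add: frechet_derivative_works)
  have cont: "continuous_on U (\<lambda>z. F' z v)" for v
  proof -
    have "continuous_on U (dirder [v] F)" using smooth unfolding smooth_on_def by blast
    then show ?thesis unfolding F'_def by simp
  qed
  have "tangent_space M x = {w. F' x w = 0}"
  proof
    show "tangent_space M x \<subseteq> {w. F' x w = 0}"
      using tangent_space_subset_kernel[OF U MU F'[OF U(2)]] by blast
    show "{w. F' x w = 0} \<subseteq> tangent_space M x"
      using kernel_subset_tangent_space[OF U x MU F' cont] rank U(2) unfolding F'_def by auto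
  qed
  then show ?thesis
    using has_derivative_linear[OF F'[OF U(2)]] by (simp add: linear_subspace_kernel)
qed

lemma tangent_space_representative:
  assumes "closed_submanifold M" and "x \<in> M"
  obtains p where "p \<in> tangent_space M x" "\<And>w. w \<in> tangent_space M x \<Longrightarrow> p \<bullet> w = a \<bullet> w"
  using subspace_tangent_space[OF assms]
proof (rule subspace_orthogonal_projection)
  fix P assume P: "\<And>h. P h \<in> tangent_space M x"
    and orth: "\<And>h k. k \<in> tangent_space M x \<Longrightarrow> (h - P h) \<bullet> k = 0"
  show thesis
  proof (rule that[OF P[of a]])
    fix w assume "w \<in> tangent_space M x"
    then show "P a \<bullet> w = a \<bullet> w" using orth[of w a] by (simp add: inner_diff_left)
  qed
qed

lemma pos_part_square_expansion:
  fixes x h :: real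
  shows "\<bar>(max 0 (x + h))\<^sup>2 - (max 0 x)\<^sup>2 - 2 * max 0 x * h\<bar> \<le> h\<^sup>2"
proof (cases "0 \<le> x"; cases "0 \<le> x + h")
  assume "0 \<le> x" "0 \<le> x + h"
  then show ?thesis by (simp add: power2_eq_square algebra_simps)
next
  assume "0 \<le> x" "\<not> 0 \<le> x + h"
  then have "(max 0 (x + h))\<^sup>2 - (max 0 x)\<^sup>2 - 2 * max 0 x * h = h\<^sup>2 - (x + h)\<^sup>2"
    by (simp add: power2_eq_square algebra_simps)
  moreover have "(x + h)\<^sup>2 \<le> h\<^sup>2" using \<open>0 \<le> x\<close> \<open>\<not> 0 \<le> x + h\<close> by (simp flip: abs_le_square_iff)
  ultimately show ?thesis by (simp add: abs_le_iff)
next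
  assume "\<not> 0 \<le> x" "0 \<le> x + h"
  moreover have "(x + h)\<^sup>2 \<le> h\<^sup>2" using calculation by (simp flip: abs_le_square_iff)
  ultimately show ?thesis by simp
qed simp

lemma has_real_derivative_pos_part_square:
  "((\<lambda>x::real. (max 0 x)\<^sup>2) has_real_derivative 2 * max 0 x) (at x)"
proof -
  let ?q = "\<lambda>h. ((max 0 (x + h))\<^sup>2 - (max 0 x)\<^sup>2) / h - 2 * max 0 x"
  have "norm (?q h) \<le> \<bar>h\<bar>" if "h \<noteq> 0" for h
  proof -
    have "?q h = ((max 0 (x + h))\<^sup>2 - (max 0 x)\<^sup>2 - 2 * max 0 x * h) / h"
      using that by (simp add: field_simps)
    also have "norm \<dots> \<le> h\<^sup>2 / \<bar>h\<bar>"
      using pos_part_square_expansion[of x h] by (simp add: abs_divide divide_right_mono)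
    also have "\<dots> = \<bar>h\<bar>" using that by (simp add: power2_eq_square field_simps)
    finally show ?thesis .
  qed
  then have "eventually (\<lambda>h. norm (?q h) \<le> \<bar>h\<bar>) (at 0)"
    by (auto simp: eventually_at_filter)
  then have "(?q \<longlongrightarrow> 0) (at 0)"
    by (rule Lim_null_comparison) (auto intro!: tendsto_eq_intros)
  then show ?thesis by (simp add: DERIV_def LIM_zero_iff)
qed

lemma lsc_on_subset: "lsc_on S u \<Longrightarrow> Q \<subseteq> S \<Longrightarrow> lsc_on Q u"
  unfolding lsc_on_def by (meson at_le filter_leD subsetD)

lemma lsc_on_diff_continuous:
  fixes v :: "'b::topological_space \<Rightarrow> ereal"
  assumes lsc: "lsc_on S v" and cont: "continuous_on S \<phi>"
  shows "lsc_on S (\<lambda>z. v z - ereal (\<phi> z))"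
  unfolding lsc_on_def
proof (intro ballI allI impI)
  fix q c assume q: "q \<in> S" and c: "c < v q - ereal (\<phi> q)"
  obtain a where a: "c < ereal a" "ereal a < v q - ereal (\<phi> q)"
    using ereal_dense2[OF c] by blast
  then have "ereal (a + \<phi> q) < v q" by (cases "v q") auto
  then obtain b where b: "ereal (a + \<phi> q) < ereal b" "ereal b < v q"
    using ereal_dense2 by blast
  have "eventually (\<lambda>z. ereal b < v z) (at q within S)"
    using lsc q b(2) unfolding lsc_on_def by blast
  moreover have "eventually (\<lambda>z. \<phi> z < b - a) (at q within S)"
    using cont q b(1) by (intro order_tendstoD) (auto simp: continuous_on_def)
  ultimately show "eventually (\<lambda>z. c < v z - ereal (\<phi> z)) (at q within S)"
  proof eventually_elim
    case (elim z)
    then have "ereal a < v z - ereal (\<phi> z)" by (cases "v z") auto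
    then show ?case using a(1) by order
  qed
qed

lemma lsc_on_compact_attains_min:
  fixes f :: "'b::topological_space \<Rightarrow> ereal"
  assumes "compact Q" "Q \<noteq> {}" and lsc: "lsc_on Q f"
  obtains q where "q \<in> Q" "\<And>z. z \<in> Q \<Longrightarrow> f q \<le> f z"
proof (rule ccontr)
  assume "\<not> thesis"
  with that have "\<exists>q'\<in>Q. f q' < f q" if "q \<in> Q" for q
    using that by (meson not_le)
  then have "\<exists>b. (\<exists>q'\<in>Q. f q' < ereal b) \<and> ereal b < f q" if "q \<in> Q" for q
    using that by (meson ereal_dense2)
  then obtain b where b: "\<And>q. q \<in> Q \<Longrightarrow> (\<exists>q'\<in>Q. f q' < ereal (b q)) \<and> ereal (b q) < f q"
    by metis
  text \<open>Each \<open>q\<close> has a neighbourhood on which \<open>f > b q\<close>; a finite subcover yields a point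
    below the least of finitely many levels \<open>b q\<close>, yet above one of them.\<close>
  have "\<exists>N. open N \<and> q \<in> N \<and> (\<forall>z\<in>N \<inter> Q. ereal (b q) < f z)" if q: "q \<in> Q" for q
  proof -
    have "eventually (\<lambda>z. ereal (b q) < f z) (at q within Q)"
      using lsc q b[OF q] unfolding lsc_on_def by blast
    then obtain N where "open N" "q \<in> N" "\<And>z. z \<in> N \<Longrightarrow> z \<noteq> q \<Longrightarrow> z \<in> Q \<Longrightarrow> ereal (b q) < f z"
      unfolding eventually_at_topological by blast
    then show ?thesis using b[OF q] by (metis IntE)
  qed
  then obtain N where N: "\<And>q. q \<in> Q \<Longrightarrow> open (N q) \<and> q \<in> N q \<and> (\<forall>z\<in>N q \<inter> Q. ereal (b q) < f z)"
    by metis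
  obtain F where F: "F \<subseteq> Q" "finite F" "Q \<subseteq> (\<Union>q\<in>F. N q)"
    using compactE_image[OF \<open>compact Q\<close>, of Q N] N by blast
  then have "F \<noteq> {}" using \<open>Q \<noteq> {}\<close> by blast
  obtain j where j: "j \<in> F" "\<And>i. i \<in> F \<Longrightarrow> b j \<le> b i"
    using arg_min_if_finite[OF F(2) \<open>F \<noteq> {}\<close>, of b] by (metis not_le)
  obtain q' where q': "q' \<in> Q" "f q' < ereal (b j)" using b j(1) F(1) by blast
  then obtain i where "i \<in> F" "q' \<in> N i" using F(3) by blast
  then have "ereal (b i) < f q'" using N q'(1) F(1) by blast
  moreover have "ereal (b j) \<le> ereal (b i)" using j(2)[OF \<open>i \<in> F\<close>] by simp
  ultimately show False using q'(2) by order
qed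

lemma Liminf_at_right_exp_bound:
  fixes f :: "real \<Rightarrow> ereal" and \<Lambda> C t :: real
  assumes "\<Lambda> > 0" "t > 0"
    and lower: "\<And>s. 0 < s \<Longrightarrow> s < t \<Longrightarrow> ereal (- C) < f s"
    and growth: "\<And>s ws. 0 < s \<Longrightarrow> s < t \<Longrightarrow> f s = ereal ws \<Longrightarrow>
                    f t \<le> ereal ((ws + C) * exp (\<Lambda> * (t - s)) - C)"
    and fin: "Liminf (at_right 0) f < \<infinity>"
  shows "f t \<le> ereal (exp (\<Lambda> * t)) * Liminf (at_right 0) f + ereal (C * (exp (\<Lambda> * t) - 1))"
proof -
  define L where "L = Liminf (at_right 0) f"
  have near: "eventually (\<lambda>s. 0 < s \<and> s < t) (at_right (0::real))"
    unfolding eventually_at_right_field using \<open>t > 0\<close> by blast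
  then have "eventually (\<lambda>s. ereal (- C) \<le> f s) (at_right 0)"
    by eventually_elim (use lower in force)
  then have "ereal (- C) \<le> L" unfolding L_def by (rule Liminf_bounded)
  then obtain l where l: "L = ereal l" using fin unfolding L_def[symmetric] by (cases L) auto
  have "f t \<le> ereal ((l + C) * exp (\<Lambda> * t) - C) + ereal e" if e: "e > 0" for e
  proof -
    define \<epsilon> where "\<epsilon> = e / exp (\<Lambda> * t)"
    have \<epsilon>: "\<epsilon> > 0" unfolding \<epsilon>_def using e by simp
    have "\<not> eventually (\<lambda>s. ereal (l + \<epsilon>) \<le> f s) (at_right 0)"
    proof
      assume "eventually (\<lambda>s. ereal (l + \<epsilon>) \<le> f s) (at_right 0)"
      then have "ereal (l + \<epsilon>) \<le> L" unfolding L_def by (rule Liminf_bounded)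
      then show False using l \<epsilon> by simp
    qed
    then have "frequently (\<lambda>s. f s < ereal (l + \<epsilon>)) (at_right 0)"
      by (simp add: not_eventually not_le)
    then have "frequently (\<lambda>s. f s < ereal (l + \<epsilon>) \<and> 0 < s \<and> s < t) (at_right 0)"
      using near by (rule frequently_eventually_frequently)
    then obtain s where s: "f s < ereal (l + \<epsilon>)" "0 < s" "s < t"
      using frequently_ex by blast
    then obtain ws where ws: "f s = ereal ws" using lower[of s] by (cases "f s") auto
    have "- C < ws" "ws < l + \<epsilon>" using lower[OF s(2,3)] s(1) ws by simp_all
    then have "(ws + C) * exp (\<Lambda> * (t - s)) \<le> (l + \<epsilon> + C) * exp (\<Lambda> * t)"
      using \<open>\<Lambda> > 0\<close> s(2) by (intro mult_mono) simp_all
    also have "\<dots> = (l + C) * exp (\<Lambda> * t) + e"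
      unfolding \<epsilon>_def by (simp add: algebra_simps)
    finally show ?thesis using growth[OF s(2,3) ws] by (simp add: order_trans)
  qed
  then have "f t \<le> ereal ((l + C) * exp (\<Lambda> * t) - C)" by (rule ereal_le_epsilon2)
  also have "\<dots> = ereal (exp (\<Lambda> * t)) * L + ereal (C * (exp (\<Lambda> * t) - 1))"
    using l by (simp add: algebra_simps)
  finally show ?thesis unfolding L_def .
qed

lemma exp_rate_margin:
  fixes A C \<Lambda> c s t \<epsilon> :: real
  assumes c: "A * exp (\<Lambda> * (t - s)) - C < c" and \<epsilon>: "\<epsilon> > 0"
  obtains \<eta> where "0 < \<eta>" "\<eta> \<le> \<epsilon>" "A * exp ((\<Lambda> + \<eta>) * (t + \<eta> - s)) - C < c"
proof -
  have "((\<lambda>\<eta>. A * exp ((\<Lambda> + \<eta>) * (t + \<eta> - s)) - C) \<longlongrightarrow> A * exp (\<Lambda> * (t - s)) - C)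
      (at_right 0)"
    by (auto intro!: tendsto_eq_intros)
  then have "eventually (\<lambda>\<eta>. A * exp ((\<Lambda> + \<eta>) * (t + \<eta> - s)) - C < c) (at_right 0)"
    using c by (rule order_tendstoD)
  moreover have "eventually (\<lambda>\<eta>. 0 < \<eta> \<and> \<eta> \<le> \<epsilon>) (at_right (0::real))"
    unfolding eventually_at_right_field using \<epsilon> by (intro exI[of _ \<epsilon>]) auto
  ultimately have "eventually (\<lambda>\<eta>. (0 < \<eta> \<and> \<eta> \<le> \<epsilon>) \<and> A * exp ((\<Lambda> + \<eta>) * (t + \<eta> - s)) - C < c)
      (at_right (0::real))"
    by eventually_elim blast
  from eventually_happens'[OF trivial_limit_at_right_real this] show thesis
    using that by blast
qed

lemma penalized_exp_has_field_derivative: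
  fixes A C K\<^sub>1 K\<^sub>2 \<mu> s t \<tau> :: real
  shows "((\<lambda>\<tau>. (A - K\<^sub>2 * (max 0 (\<tau> - t))\<^sup>2) * exp (\<mu> * (\<tau> - s)) - C - K\<^sub>1 * (max 0 (s - \<tau>))\<^sup>2)
    has_field_derivative (A - K\<^sub>2 * (max 0 (\<tau> - t))\<^sup>2) * (\<mu> * exp (\<mu> * (\<tau> - s)))
      - K\<^sub>2 * (2 * max 0 (\<tau> - t)) * exp (\<mu> * (\<tau> - s)) + K\<^sub>1 * (2 * max 0 (s - \<tau>))) (at \<tau>)"
proof -
  have "((\<lambda>\<tau>. \<tau> - t) has_real_derivative 1) (at \<tau>)" "((\<lambda>\<tau>. s - \<tau>) has_real_derivative -1) (at \<tau>)"
    by (auto intro!: derivative_eq_intros)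
  from this[THEN DERIV_chain2[OF has_real_derivative_pos_part_square]]
  have "((\<lambda>\<tau>. (max 0 (\<tau> - t))\<^sup>2) has_real_derivative 2 * max 0 (\<tau> - t) * 1) (at \<tau>)"
    "((\<lambda>\<tau>. (max 0 (s - \<tau>))\<^sup>2) has_real_derivative 2 * max 0 (s - \<tau>) * -1) (at \<tau>)"
    by simp_all
  moreover have "((\<lambda>\<tau>. exp (\<mu> * (\<tau> - s))) has_real_derivative \<mu> * exp (\<mu> * (\<tau> - s))) (at \<tau>)"
    by (auto intro!: derivative_eq_intros)
  ultimately have "((\<lambda>\<tau>. (A - K\<^sub>2 * (max 0 (\<tau> - t))\<^sup>2) * exp (\<mu> * (\<tau> - s)) - C - K\<^sub>1 * (max 0 (s - \<tau>))\<^sup>2)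
      has_real_derivative (0 - K\<^sub>2 * (2 * max 0 (\<tau> - t) * 1)) * exp (\<mu> * (\<tau> - s))
        + \<mu> * exp (\<mu> * (\<tau> - s)) * (A - K\<^sub>2 * (max 0 (\<tau> - t))\<^sup>2) - 0
        - K\<^sub>1 * (2 * max 0 (s - \<tau>) * -1)) (at \<tau>)"
    by (intro DERIV_diff DERIV_mult DERIV_cmult DERIV_const)
  then show ?thesis by (simp add: algebra_simps)
qed

text \<open>For \<open>\<tau> < t\<close> the profile \<open>\<theta>\<close> is a strict supersolution of \<open>\<theta>' = \<Lambda> (\<theta> + C)\<close> with
  \<open>\<theta> s = A - C\<close>; the penalty terms \<open>(s - \<tau>)\<^sub>+\<^sup>2\<close> and \<open>(\<tau> - t)\<^sub>+\<^sup>2\<close> push it below any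
  prescribed level \<open>L\<close> away from \<open>[s/2, t + \<eta>)\<close>.\<close>
lemma exponential_time_barrier:
  fixes \<Lambda> A C L c s t \<epsilon> :: real
  assumes \<Lambda>: "\<Lambda> > 0" and st: "0 < s" "s < t" and A: "A > 0"
    and c: "A * exp (\<Lambda> * (t - s)) - C < c" and \<epsilon>: "\<epsilon> > 0" and L: "- C < L"
  obtains \<eta> and \<theta> \<theta>' :: "real \<Rightarrow> real" where "0 < \<eta>" "\<eta> \<le> \<epsilon>"
    "\<And>\<tau>. (\<theta> has_field_derivative \<theta>' \<tau>) (at \<tau>)" "continuous_on UNIV \<theta>'"
    "\<theta> s = A - C"
    "\<And>\<tau>. \<tau> < s / 2 \<or> t + \<eta> \<le> \<tau> \<Longrightarrow> \<theta> \<tau> < L"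
    "\<And>\<tau>. \<tau> < t + \<eta> \<Longrightarrow> \<theta> \<tau> < c"
    "\<And>\<tau>. \<tau> < t \<Longrightarrow> \<Lambda> * (\<theta> \<tau> + C) < \<theta>' \<tau>"
proof -
  obtain \<eta> where \<eta>: "0 < \<eta>" "\<eta> \<le> \<epsilon>" and margin: "A * exp ((\<Lambda> + \<eta>) * (t + \<eta> - s)) - C < c"
    using exp_rate_margin[OF c \<epsilon>] by blast
  define \<mu> where "\<mu> = \<Lambda> + \<eta>"
  have \<mu>: "\<Lambda> < \<mu>" unfolding \<mu>_def using \<eta> by simp
  define E where "E \<tau> = exp (\<mu> * (\<tau> - s))" for \<tau>
  have E_pos: "E \<tau> > 0" for \<tau> unfolding E_def by simp
  have E_mono: "E \<tau>\<^sub>1 \<le> E \<tau>\<^sub>2" if "\<tau>\<^sub>1 \<le> \<tau>\<^sub>2" for \<tau>\<^sub>1 \<tau>\<^sub>2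
    unfolding E_def using that \<mu> \<Lambda> by (simp add: mult_left_mono)
  define pp where "pp r = (max 0 r)\<^sup>2" for r :: real
  have pp_nonneg: "pp r \<ge> 0" for r unfolding pp_def by simp
  have pp_0: "pp r = 0" if "r \<le> 0" for r unfolding pp_def using that by simp
  define K\<^sub>1 where "K\<^sub>1 = 4 * (A + \<bar>C\<bar> + \<bar>L\<bar> + 1) / s\<^sup>2"
  define K\<^sub>2 where "K\<^sub>2 = A / \<eta>\<^sup>2"
  have K\<^sub>1: "K\<^sub>1 > 0" unfolding K\<^sub>1_def using A st by simp
  have K\<^sub>2: "K\<^sub>2 > 0" unfolding K\<^sub>2_def using A \<eta> by simp
  define \<theta> where "\<theta> = (\<lambda>\<tau>. (A - K\<^sub>2 * pp (\<tau> - t)) * E \<tau> - C - K\<^sub>1 * pp (s - \<tau>))"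
  define \<theta>' where "\<theta>' \<tau> = (A - K\<^sub>2 * pp (\<tau> - t)) * (\<mu> * E \<tau>) - K\<^sub>2 * (2 * max 0 (\<tau> - t)) * E \<tau>
      + K\<^sub>1 * (2 * max 0 (s - \<tau>))" for \<tau>
  have "(\<theta> has_field_derivative \<theta>' \<tau>) (at \<tau>)" for \<tau>
    unfolding \<theta>_def \<theta>'_def pp_def E_def by (rule penalized_exp_has_field_derivative)
  moreover have "continuous_on UNIV \<theta>'"
    unfolding \<theta>'_def pp_def E_def by (intro continuous_intros)
  moreover have "\<theta> s = A - C" unfolding \<theta>_def E_def using pp_0 st by simp
  moreover have \<theta>_le: "\<theta> \<tau> \<le> A * E \<tau> - C - K\<^sub>1 * pp (s - \<tau>)" for \<tau>
    unfolding \<theta>_def using K\<^sub>2 pp_nonneg[of "\<tau> - t"] E_pos[of \<tau>]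
    by (simp add: algebra_simps)
  moreover have "\<theta> \<tau> < L" if "\<tau> < s / 2 \<or> t + \<eta> \<le> \<tau>" for \<tau>
    using that
  proof
    assume \<tau>: "\<tau> < s / 2"
    have "A * E \<tau> \<le> A * E s" using \<tau> st A by (intro mult_left_mono E_mono) simp_all
    moreover have "(s / 2)\<^sup>2 \<le> pp (s - \<tau>)"
      unfolding pp_def using \<tau> st by (intro power_mono) simp_all
    then have "K\<^sub>1 * (s / 2)\<^sup>2 \<le> K\<^sub>1 * pp (s - \<tau>)" using K\<^sub>1 by simp
    moreover have "K\<^sub>1 * (s / 2)\<^sup>2 = A + \<bar>C\<bar> + \<bar>L\<bar> + 1"
      unfolding K\<^sub>1_def using st by (simp add: power2_eq_square)
    moreover have "A * E s = A" "- C \<le> \<bar>C\<bar>" "- L \<le> \<bar>L\<bar>" unfolding E_def by simp_all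
    ultimately show ?thesis using \<theta>_le[of \<tau>] by linarith
  next
    assume \<tau>: "t + \<eta> \<le> \<tau>"
    have "\<eta>\<^sup>2 \<le> pp (\<tau> - t)" unfolding pp_def using \<tau> \<eta> by (intro power_mono) simp_all
    then have "A \<le> K\<^sub>2 * pp (\<tau> - t)"
      unfolding K\<^sub>2_def using \<eta> A by (simp add: field_simps)
    then have "(A - K\<^sub>2 * pp (\<tau> - t)) * E \<tau> \<le> 0"
      using E_pos[of \<tau>] by (simp add: mult_nonpos_nonneg)
    moreover have "0 \<le> K\<^sub>1 * pp (s - \<tau>)" using K\<^sub>1 pp_nonneg by simp
    ultimately show ?thesis unfolding \<theta>_def using L by linarith
  qed
  moreover have "\<theta> \<tau> < c" if "\<tau> < t + \<eta>" for \<tau>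
  proof -
    have "A * E \<tau> \<le> A * E (t + \<eta>)" using that A by (intro mult_left_mono E_mono) simp_all
    moreover have "A * E (t + \<eta>) - C < c" using margin unfolding E_def \<mu>_def by (simp add: algebra_simps)
    moreover have "0 \<le> K\<^sub>1 * pp (s - \<tau>)" using K\<^sub>1 pp_nonneg by simp
    ultimately show ?thesis using \<theta>_le[of \<tau>] by linarith
  qed
  moreover have "\<Lambda> * (\<theta> \<tau> + C) < \<theta>' \<tau>" if "\<tau> < t" for \<tau>
  proof -
    have "0 \<le> K\<^sub>1 * pp (s - \<tau>)" using K\<^sub>1 pp_nonneg by simp
    then have "\<Lambda> * (\<theta> \<tau> + C) \<le> \<Lambda> * (A * E \<tau>)"
      using \<theta>_le[of \<tau>] \<Lambda> by (intro mult_left_mono) simp_all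
    also have "\<dots> < \<mu> * (A * E \<tau>)" using \<mu> A E_pos[of \<tau>] by simp
    also have "\<dots> \<le> \<theta>' \<tau>" unfolding \<theta>'_def using that pp_0[of "\<tau> - t"] K\<^sub>1 by simp
    finally show ?thesis .
  qed
  ultimately show thesis using that \<eta> by blast
qed

lemma BJ_subsol_min_of_separable_test:
  fixes M :: "'a::euclidean_space set" and \<theta> \<theta>' :: "real \<Rightarrow> real" and K :: real
  assumes man: "closed_submanifold M" and sub: "BJ_subsol M H T v"
    and \<theta>: "\<And>\<tau>. (\<theta> has_field_derivative \<theta>' \<tau>) (at \<tau>)" "continuous_on UNIV \<theta>'"
    and x: "(x, \<tau>) \<in> stdom M T" and u: "v (x, \<tau>) = ereal u"
    and min: "\<And>z \<sigma>. (z, \<sigma>) \<in> stdom M T \<Longrightarrow>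
      v (x, \<tau>) - ereal (\<theta> \<tau> - K * ((x - y) \<bullet> (x - y))) \<le> v (z, \<sigma>) - ereal (\<theta> \<sigma> - K * ((z - y) \<bullet> (z - y)))"
  obtains p where "p \<in> tangent_space M x" "\<theta>' \<tau> + H x p u \<le> 0"
proof -
  define \<phi> where "\<phi> q = \<theta> (snd q) - K * ((fst q - y) \<bullet> (fst q - y))" for q :: "'a \<times> real"
  define D\<phi> where "D\<phi> q d = \<theta>' (snd q) * snd d - 2 * K * ((fst q - y) \<bullet> fst d)" for q d :: "'a \<times> real"
  have der\<phi>: "(\<phi> has_derivative D\<phi> q) (at q)" for q
  proof -
    have "(snd has_derivative snd) (at q)"
      by (rule bounded_linear_imp_has_derivative[OF bounded_linear_snd])
    from has_derivative_compose[OF this \<theta>(1)[unfolded has_field_derivative_def]]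
    have "((\<lambda>q. \<theta> (snd q)) has_derivative (\<lambda>d. \<theta>' (snd q) * snd d)) (at q)" by simp
    then show ?thesis unfolding \<phi>_def D\<phi>_def
      by (auto intro!: derivative_eq_intros simp: inner_commute algebra_simps)
  qed
  define \<phi>' where "\<phi>' q = Blinfun (D\<phi> q)" for q
  have \<phi>': "blinfun_apply (\<phi>' q) = D\<phi> q" for q
    unfolding \<phi>'_def using der\<phi>[of q] has_derivative_bounded_linear
    by (blast intro: bounded_linear_Blinfun_apply)
  have "continuous_on UNIV \<phi>'"
  proof (rule continuous_on_blinfun_componentwise)
    fix d :: "'a \<times> real"
    have "continuous_on UNIV (\<lambda>q::'a \<times> real. \<theta>' (snd q))"
      using continuous_on_compose2[OF \<theta>(2) continuous_on_snd[OF continuous_on_id]] by simp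
    then show "continuous_on UNIV (\<lambda>q. blinfun_apply (\<phi>' q) d)"
      unfolding \<phi>' D\<phi>_def by (intro continuous_intros)
  qed
  then have "C1_test M T \<phi> \<phi>'"
    unfolding C1_test_def using der\<phi> \<phi>' by (intro exI[of _ UNIV]) auto
  moreover obtain p where p: "p \<in> tangent_space M x"
    and "\<And>w. w \<in> tangent_space M x \<Longrightarrow> p \<bullet> w = (- (2 * K) *\<^sub>R (x - y)) \<bullet> w"
    using tangent_space_representative[OF man] x unfolding stdom_def by blast
  then have "\<forall>w\<in>tangent_space M x. p \<bullet> w = \<phi>' (x, \<tau>) (w, 0)"
    by (simp add: \<phi>' D\<phi>_def inner_commute)
  moreover have "\<forall>z\<in>stdom M T. v (x, \<tau>) - ereal (\<phi> (x, \<tau>)) \<le> v z - ereal (\<phi> z)"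
    using min unfolding \<phi>_def by auto
  moreover have "v (x, \<tau>) \<noteq> \<infinity>" using u by simp
  ultimately have "\<phi>' (x, \<tau>) (0, 1) + H x p (real_of_ereal (v (x, \<tau>))) \<le> 0"
    using sub x p \<open>v (x, \<tau>) \<noteq> \<infinity>\<close> unfolding BJ_subsol_def by blast
  then show thesis using that p u by (simp add: \<phi>' D\<phi>_def)
qed

lemma lsc_on_Times_neighbourhood:
  fixes v :: "'a::real_normed_vector \<times> real \<Rightarrow> ereal"
  assumes lsc: "lsc_on S v" and yt: "(y, t) \<in> S" and c: "c < v (y, t)"
  obtains \<delta> where "\<delta> > 0"
    "\<And>z \<tau>. (z, \<tau>) \<in> S \<Longrightarrow> norm (z - y) < \<delta> \<Longrightarrow> \<bar>\<tau> - t\<bar> < \<delta> \<Longrightarrow> c < v (z, \<tau>)"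
proof -
  have "eventually (\<lambda>q. c < v q) (at (y, t) within S)"
    using lsc yt c unfolding lsc_on_def by blast
  then obtain d where d: "d > 0"
    and near: "\<And>q. q \<in> S \<Longrightarrow> q \<noteq> (y, t) \<Longrightarrow> dist q (y, t) < d \<Longrightarrow> c < v q"
    unfolding eventually_at by blast
  show thesis
  proof (rule that[of "d / 2"])
    fix z \<tau> assume z\<tau>: "(z, \<tau>) \<in> S" "norm (z - y) < d / 2" "\<bar>\<tau> - t\<bar> < d / 2"
    have "dist (z, \<tau>) (y, t) \<le> dist z y + dist \<tau> t"
      unfolding dist_Pair_Pair by (rule sqrt_sum_squares_le_sum[OF zero_le_dist zero_le_dist])
    also have "\<dots> < d" using z\<tau>(2,3) by (simp add: dist_norm dist_real_def)
    finally show "c < v (z, \<tau>)"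
      using near[OF z\<tau>(1)] c by (cases "(z, \<tau>) = (y, t)") auto
  qed (use d in simp)
qed

lemma lsc_on_Times_attains_min_in_window:
  fixes \<Psi> :: "'a::topological_space \<times> real \<Rightarrow> ereal"
  assumes "compact M" and lsc: "lsc_on S \<Psi>" and window: "M \<times> {a..b} \<subseteq> S" and S: "fst ` S \<subseteq> M"
    and q\<^sub>0: "q\<^sub>0 \<in> M \<times> {a..b}" "\<Psi> q\<^sub>0 \<le> 0"
    and pos: "\<And>z \<tau>. (z, \<tau>) \<in> S \<Longrightarrow> \<tau> < a \<or> b \<le> \<tau> \<Longrightarrow> 0 < \<Psi> (z, \<tau>)"
  obtains x \<tau> where "x \<in> M" "a \<le> \<tau>" "\<tau> < b" "\<Psi> (x, \<tau>) \<le> 0" "\<forall>q\<in>S. \<Psi> (x, \<tau>) \<le> \<Psi> q"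
proof -
  have "compact (M \<times> {a..b})" using \<open>compact M\<close> by (intro compact_Times compact_Icc)
  moreover have "lsc_on (M \<times> {a..b}) \<Psi>" using lsc window by (rule lsc_on_subset)
  ultimately obtain q where q: "q \<in> M \<times> {a..b}" and min: "\<And>q'. q' \<in> M \<times> {a..b} \<Longrightarrow> \<Psi> q \<le> \<Psi> q'"
    using lsc_on_compact_attains_min q\<^sub>0(1) by blast
  obtain x \<tau> where q_eq: "q = (x, \<tau>)" by (cases q)
  have nonpos: "\<Psi> (x, \<tau>) \<le> 0" using min[OF q\<^sub>0(1)] q\<^sub>0(2) q_eq by simp
  have "(x, \<tau>) \<in> S" using q window q_eq by blast
  have "\<tau> < b"
  proof (rule ccontr)
    assume "\<not> \<tau> < b"
    then have "0 < \<Psi> (x, \<tau>)" using pos[OF \<open>(x, \<tau>) \<in> S\<close>] by simp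
    then show False using nonpos by simp
  qed
  moreover have "\<Psi> (x, \<tau>) \<le> \<Psi> q'" if "q' \<in> S" for q'
  proof (cases "q' \<in> M \<times> {a..b}")
    case False
    then have "0 < \<Psi> q'" using pos that S by (cases q') force
    then show ?thesis using nonpos by simp
  qed (use min q_eq in simp)
  ultimately show thesis using q q_eq nonpos by (intro that) auto
qed

text \<open>Near \<open>(y, t)\<close> lower semicontinuity keeps \<open>v\<close> above \<open>c > \<theta>\<close>, far from \<open>y\<close> the spatial
  penalty does, and at other times \<open>\<theta>\<close> itself lies below the lower bound of \<open>v\<close>.\<close>
lemma separable_test_below_outside_window:
  fixes v :: "'a::real_inner \<times> real \<Rightarrow> ereal" and \<theta> :: "real \<Rightarrow> real"
  assumes lower: "\<And>q. q \<in> S \<Longrightarrow> ereal L \<le> v q"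
    and near: "\<And>z \<tau>. (z, \<tau>) \<in> S \<Longrightarrow> norm (z - y) < \<delta> \<Longrightarrow> \<bar>\<tau> - t\<bar> < \<delta> \<Longrightarrow> ereal c < v (z, \<tau>)"
    and \<theta>_out: "\<And>\<tau>. \<tau> < a \<or> t + \<eta> \<le> \<tau> \<Longrightarrow> \<theta> \<tau> < L"
    and \<theta>_c: "\<And>\<tau>. \<tau> < t + \<eta> \<Longrightarrow> \<theta> \<tau> < c"
    and \<eta>: "0 < \<eta>" "\<eta> \<le> \<delta>" and K: "0 \<le> K" "c - L \<le> K * \<delta>\<^sup>2"
    and z\<tau>: "(z, \<tau>) \<in> S" "\<tau> < a \<or> t \<le> \<tau>"
  shows "ereal (\<theta> \<tau> - K * ((z - y) \<bullet> (z - y))) < v (z, \<tau>)"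
proof -
  have \<phi>_le: "\<theta> \<tau> - K * ((z - y) \<bullet> (z - y)) \<le> \<theta> \<tau>" using K(1) by simp
  consider "\<tau> < a \<or> t + \<eta> \<le> \<tau>" | "\<tau> < t + \<eta>" "norm (z - y) < \<delta>" "\<bar>\<tau> - t\<bar> < \<delta>"
    | "\<tau> < t + \<eta>" "\<delta> \<le> norm (z - y)"
    using z\<tau>(2) \<eta> by fastforce
  then show ?thesis
  proof cases
    case 1
    then have "ereal (\<theta> \<tau> - K * ((z - y) \<bullet> (z - y))) < ereal L" using \<theta>_out[OF 1] \<phi>_le by simp
    then show ?thesis using lower[OF z\<tau>(1)] by order
  next
    case 2
    then have "ereal (\<theta> \<tau> - K * ((z - y) \<bullet> (z - y))) < ereal c" using \<theta>_c[OF 2(1)] \<phi>_le by simp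
    then show ?thesis using near[OF z\<tau>(1) 2(2,3)] by order
  next
    case 3
    then have "\<delta>\<^sup>2 \<le> (z - y) \<bullet> (z - y)"
      using \<eta> by (simp add: power_mono flip: power2_norm_eq_inner)
    then have "c - L \<le> K * ((z - y) \<bullet> (z - y))" using K by (meson mult_left_mono order_trans)
    then have "ereal (\<theta> \<tau> - K * ((z - y) \<bullet> (z - y))) < ereal L" using \<theta>_c[OF 3(1)] by simp
    then show ?thesis using lower[OF z\<tau>(1)] by order
  qed
qed

lemma BJ_subsol_exp_growth:
  fixes M :: "'a::euclidean_space set" and H :: "'a \<Rightarrow> 'a \<Rightarrow> real \<Rightarrow> real"
    and \<Lambda> C\<^sub>0 C\<^sub>1 :: real and T :: ereal and v :: "'a \<times> real \<Rightarrow> ereal" and y :: 'a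
  assumes man: "closed_submanifold M" and \<Lambda>: "\<Lambda> > 0"
    and H4: "\<And>x p u w. x \<in> M \<Longrightarrow> p \<in> tangent_space M x \<Longrightarrow> \<bar>H x p u - H x p w\<bar> \<le> \<Lambda> * \<bar>u - w\<bar>"
    and lsc: "lsc_on (M \<times> {t. 0 \<le> t \<and> ereal t < T}) v"
    and sub: "BJ_subsol M H T v"
    and C\<^sub>0: "C\<^sub>0 > 0" and C\<^sub>1: "C\<^sub>1 > 0"
    and HC\<^sub>0: "\<And>x p. x \<in> M \<Longrightarrow> p \<in> tangent_space M x \<Longrightarrow> H x p 0 \<ge> - C\<^sub>0"
    and vC\<^sub>1: "\<And>x t. x \<in> M \<Longrightarrow> 0 \<le> t \<Longrightarrow> ereal t < T \<Longrightarrow> v (x, t) \<ge> ereal (- C\<^sub>1)"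
    and y: "y \<in> M"
    and st: "0 < s" "s < t" "ereal t < T" and ws: "v (y, s) = ereal ws"
  shows "v (y, t) \<le> ereal ((ws + (C\<^sub>0 / \<Lambda> + 2 * C\<^sub>1)) * exp (\<Lambda> * (t - s)) - (C\<^sub>0 / \<Lambda> + 2 * C\<^sub>1))"
proof (rule ccontr)
  define C where "C = C\<^sub>0 / \<Lambda> + 2 * C\<^sub>1"
  have C_gt: "C\<^sub>1 < C" unfolding C_def using C\<^sub>0 C\<^sub>1 \<Lambda> by (simp add: add_pos_pos)
  have \<Lambda>C: "\<Lambda> * C = C\<^sub>0 + 2 * \<Lambda> * C\<^sub>1" unfolding C_def using \<Lambda> by (simp add: field_simps)
  define A where "A = ws + C"
  define S where "S = M \<times> {t. 0 \<le> t \<and> ereal t < T}"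
  have lower: "ereal (- C\<^sub>1) \<le> v q" if "q \<in> S" for q using vC\<^sub>1 that unfolding S_def by auto
  have sT: "ereal s < T" using st by (meson ereal_less_eq(3) le_less_trans less_imp_le)
  have "(y, s) \<in> S" "(y, t) \<in> S" unfolding S_def using y st sT by auto
  then have A: "A > 0" unfolding A_def using lower ws C_gt by force
  assume "\<not> ?thesis"
  then have "ereal (A * exp (\<Lambda> * (t - s)) - C) < v (y, t)" unfolding A_def C_def by simp
  then obtain c where c: "A * exp (\<Lambda> * (t - s)) - C < c" "ereal c < v (y, t)"
    by (meson ereal_dense2 less_ereal.simps(1))
  obtain \<delta> where \<delta>: "\<delta> > 0"
    and near: "\<And>z \<tau>. (z, \<tau>) \<in> S \<Longrightarrow> norm (z - y) < \<delta> \<Longrightarrow> \<bar>\<tau> - t\<bar> < \<delta> \<Longrightarrow> ereal c < v (z, \<tau>)"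
    using lsc_on_Times_neighbourhood[OF lsc[folded S_def] \<open>(y, t) \<in> S\<close> c(2)] by blast
  have "- C < - C\<^sub>1" using C_gt by simp
  then obtain \<eta> :: real and \<theta> \<theta>' :: "real \<Rightarrow> real" where \<eta>: "0 < \<eta>" "\<eta> \<le> \<delta>"
    and \<theta>': "\<And>\<tau>. (\<theta> has_field_derivative \<theta>' \<tau>) (at \<tau>)" "continuous_on UNIV \<theta>'"
    and \<theta>_s: "\<theta> s = A - C"
    and \<theta>_out: "\<And>\<tau>. \<tau> < s / 2 \<or> t + \<eta> \<le> \<tau> \<Longrightarrow> \<theta> \<tau> < - C\<^sub>1"
    and \<theta>_c: "\<And>\<tau>. \<tau> < t + \<eta> \<Longrightarrow> \<theta> \<tau> < c"
    and \<theta>_slope: "\<And>\<tau>. \<tau> < t \<Longrightarrow> \<Lambda> * (\<theta> \<tau> + C) < \<theta>' \<tau>"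
    using exponential_time_barrier[OF \<Lambda> st(1,2) A c(1) \<delta>] by blast
  define K where "K = max 0 (c + C\<^sub>1) / \<delta>\<^sup>2"
  have K: "0 \<le> K" "c - - C\<^sub>1 \<le> K * \<delta>\<^sup>2" unfolding K_def using \<delta> by auto
  define \<Psi> where "\<Psi> q = v q - ereal (\<theta> (snd q) - K * ((fst q - y) \<bullet> (fst q - y)))" for q
  have "continuous_on UNIV \<theta>"
    using \<theta>'(1) by (auto intro!: continuous_at_imp_continuous_on DERIV_isCont)
  then have "continuous_on S (\<lambda>q. \<theta> (snd q))"
    using continuous_on_compose2[OF _ continuous_on_snd[OF continuous_on_id]] by fastforce
  then have "continuous_on S (\<lambda>q. \<theta> (snd q) - K * ((fst q - y) \<bullet> (fst q - y)))"
    by (intro continuous_on_diff continuous_intros)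
  then have lsc_\<Psi>: "lsc_on S \<Psi>" unfolding \<Psi>_def by (rule lsc_on_diff_continuous[OF lsc[folded S_def]])
  have "compact M" using man unfolding closed_submanifold_def by blast
  moreover note lsc_\<Psi>
  moreover have "M \<times> {s / 2..t} \<subseteq> S" unfolding S_def using st
    by (auto intro: le_less_trans[OF ereal_less_eq(3)[THEN iffD2]])
  moreover have "fst ` S \<subseteq> M" unfolding S_def by auto
  moreover have "(y, s) \<in> M \<times> {s / 2..t}" "\<Psi> (y, s) \<le> 0"
    using y st ws \<theta>_s unfolding \<Psi>_def A_def by simp_all
  moreover have "0 < \<Psi> (z, \<tau>)" if "(z, \<tau>) \<in> S" "\<tau> < s / 2 \<or> t \<le> \<tau>" for z \<tau>
    using separable_test_below_outside_window[where v = v and \<theta> = \<theta>, OF lower near \<theta>_out \<theta>_c \<eta> K that]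
    unfolding \<Psi>_def by (cases "v (z, \<tau>)") auto
  ultimately obtain x \<tau> where x: "x \<in> M" and \<tau>: "s / 2 \<le> \<tau>" "\<tau> < t"
    and \<Psi>_nonpos: "\<Psi> (x, \<tau>) \<le> 0" and min: "\<forall>q\<in>S. \<Psi> (x, \<tau>) \<le> \<Psi> q"
    by (rule lsc_on_Times_attains_min_in_window)
  have "ereal \<tau> < T" using \<tau>(2) st(3) by (meson ereal_less_eq(3) le_less_trans less_imp_le)
  then have x\<tau>: "(x, \<tau>) \<in> S" "(x, \<tau>) \<in> stdom M T"
    using x \<tau> st unfolding S_def stdom_def by auto
  obtain u where u: "v (x, \<tau>) = ereal u"
    using \<Psi>_nonpos lower[OF x\<tau>(1)] unfolding \<Psi>_def by (cases "v (x, \<tau>)") auto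
  obtain p where p: "p \<in> tangent_space M x" and BJ: "\<theta>' \<tau> + H x p u \<le> 0"
  proof (rule BJ_subsol_min_of_separable_test[OF man sub \<theta>' x\<tau>(2) u, where K = K and y = y])
    show "v (x, \<tau>) - ereal (\<theta> \<tau> - K * ((x - y) \<bullet> (x - y)))
        \<le> v (z, \<sigma>) - ereal (\<theta> \<sigma> - K * ((z - y) \<bullet> (z - y)))" if "(z, \<sigma>) \<in> stdom M T" for z \<sigma>
      using min that unfolding \<Psi>_def S_def stdom_def by auto
  qed
  have "- C\<^sub>1 \<le> u" using lower[OF x\<tau>(1)] u by simp
  have "0 \<le> K * ((x - y) \<bullet> (x - y))" using K(1) by simp
  then have "u \<le> \<theta> \<tau>" using \<Psi>_nonpos u unfolding \<Psi>_def by simp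
  have "- C\<^sub>0 - \<Lambda> * \<bar>u\<bar> \<le> H x p u"
    using H4[OF x p, of u 0] HC\<^sub>0[OF x p] by (simp add: abs_le_iff)
  moreover have "\<Lambda> * \<bar>u\<bar> \<le> \<Lambda> * (u + 2 * C\<^sub>1)" using \<open>- C\<^sub>1 \<le> u\<close> C\<^sub>1 \<Lambda> by (intro mult_left_mono) auto
  moreover have "\<Lambda> * (u + C) \<le> \<Lambda> * (\<theta> \<tau> + C)" using \<open>u \<le> \<theta> \<tau>\<close> \<Lambda> by simp
  ultimately show False using BJ \<theta>_slope[OF \<tau>(2)] \<Lambda>C by (simp add: algebra_simps)
qed

theorem lemma2p4:
  fixes M :: "'a::euclidean_space set"
    and H :: "'a \<Rightarrow> 'a \<Rightarrow> real \<Rightarrow> real"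
    and \<Lambda> C\<^sub>0 C\<^sub>1 :: real and T :: ereal
    and v :: "'a \<times> real \<Rightarrow> ereal" and y :: 'a
  assumes manifold: "closed_submanifold M"
    and H1: "continuous_on {(x, p, u). x \<in> M \<and> p \<in> tangent_space M x} (\<lambda>(x, p, u). H x p u)"
    and H2: "\<And>R. R > 0 \<Longrightarrow> \<exists>K>0. \<forall>x\<in>M. \<forall>p\<in>tangent_space M x. \<forall>u.
                \<bar>u\<bar> \<le> R \<and> norm p \<ge> K \<longrightarrow> H x p u > R"
    and H3: "\<And>x u. x \<in> M \<Longrightarrow> convex_on (tangent_space M x) (\<lambda>p. H x p u)"
    and Lpos: "\<Lambda> > 0"
    and H4: "\<And>x p u w. x \<in> M \<Longrightarrow> p \<in> tangent_space M x \<Longrightarrow> \<bar>H x p u - H x p w\<bar> \<le> \<Lambda> * \<bar>u - w\<bar>"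
    and Tpos: "T > 0"
    and lsc: "lsc_on (M \<times> {t. 0 \<le> t \<and> ereal t < T}) v"
    and sub: "BJ_subsol M H T v"
    and bdd: "\<exists>c::real. \<forall>x\<in>M. \<forall>t. 0 \<le> t \<and> ereal t < T \<longrightarrow> ereal c \<le> v (x, t)"
    and C0pos: "C\<^sub>0 > 0" and C1pos: "C\<^sub>1 > 0"
    and HC0: "\<And>x p. x \<in> M \<Longrightarrow> p \<in> tangent_space M x \<Longrightarrow> H x p 0 \<ge> - C\<^sub>0"
    and vC1: "\<And>x t. x \<in> M \<Longrightarrow> 0 \<le> t \<Longrightarrow> ereal t < T \<Longrightarrow> v (x, t) \<ge> ereal (- C\<^sub>1)"
    and yM: "y \<in> M"
  shows "(Liminf (at_right 0) (\<lambda>s. v (y, s)) < \<infinity> \<longrightarrow>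
           (\<forall>t. 0 < t \<and> ereal t < T \<longrightarrow>
              v (y, t) \<le> ereal (exp (\<Lambda> * t)) * Liminf (at_right 0) (\<lambda>s. v (y, s))
                        + ereal ((C\<^sub>0 / \<Lambda> + 2 * C\<^sub>1) * (exp (\<Lambda> * t) - 1))))
       \<and> (\<forall>s. 0 < s \<and> ereal s < T \<and> v (y, s) < \<infinity> \<longrightarrow>
           (\<forall>t. s < t \<and> ereal t < T \<longrightarrow>
              v (y, t) \<le> v (y, s) * ereal (exp (\<Lambda> * (t - s)))
                        + ereal ((C\<^sub>0 / \<Lambda> + 2 * C\<^sub>1) * (exp (\<Lambda> * (t - s)) - 1))))"
proof -
  define C where "C = C\<^sub>0 / \<Lambda> + 2 * C\<^sub>1"
  have "C\<^sub>1 < C" unfolding C_def using C0pos C1pos Lpos by (simp add: add_pos_pos)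
  have earlier: "ereal s < T" if "s < t" "ereal t < T" for s t
    using that by (meson ereal_less_eq(3) le_less_trans less_imp_le)
  have lower: "ereal (- C) < v (y, s)" if "0 < s" "ereal s < T" for s
  proof -
    have "ereal (- C) < ereal (- C\<^sub>1)" using \<open>C\<^sub>1 < C\<close> by simp
    also have "\<dots> \<le> v (y, s)" using vC1[OF yM, of s] that by simp
    finally show ?thesis .
  qed
  have growth: "v (y, t) \<le> ereal ((ws + C) * exp (\<Lambda> * (t - s)) - C)"
    if "0 < s" "s < t" "ereal t < T" "v (y, s) = ereal ws" for s t ws
    unfolding C_def by (rule BJ_subsol_exp_growth[OF manifold Lpos H4 lsc sub C0pos C1pos HC0 vC1 yM that])
  show ?thesis
    unfolding C_def[symmetric]
  proof (intro conjI impI allI)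
    fix t assume "Liminf (at_right 0) (\<lambda>s. v (y, s)) < \<infinity>" and t: "0 < t \<and> ereal t < T"
    then show "v (y, t) \<le> ereal (exp (\<Lambda> * t)) * Liminf (at_right 0) (\<lambda>s. v (y, s))
        + ereal (C * (exp (\<Lambda> * t) - 1))"
      using Liminf_at_right_exp_bound[OF Lpos, where f = "\<lambda>s. v (y, s)" and C = C] lower growth earlier
      by simp
  next
    fix s t assume s: "0 < s \<and> ereal s < T \<and> v (y, s) < \<infinity>" and t: "s < t \<and> ereal t < T"
    then obtain ws where ws: "v (y, s) = ereal ws" using lower[of s] by (cases "v (y, s)") auto
    then have "v (y, t) \<le> ereal ((ws + C) * exp (\<Lambda> * (t - s)) - C)" using growth s t by simp
    then show "v (y, t) \<le> v (y, s) * ereal (exp (\<Lambda> * (t - s))) + ereal (C * (exp (\<Lambda> * (t - s)) - 1))"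
      using ws by (simp add: algebra_simps)
  qed
qed

end
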